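(* Let $p$ be an odd prime and $k\in\{1,2,\ldots,(p-1)/2\}$. Then $$\binom{\frac{p-1}2+k}{2k}\equiv\frac{\binom{2k}k}{(-16)^k}\Big(1-p^2\sum_{i=1}^k\frac1{(2i-1)^2}\Big)\pmod{p^4}.$$
   Context: Congruences are between rational numbers whose denominators are prime to $p$. *)

theory Defs
  imports Complex_Main "HOL-Computational_Algebra.Primes"
begin

definition rat_cong_pow :: "nat \<Rightarrow> nat \<Rightarrow> rat \<Rightarrow> rat \<Rightarrow> bool" where
  "rat_cong_pow p n a b \<longleftrightarrow>
     (\<exists>r::rat. a - b = of_nat p ^ n * r \<and> coprime (snd (quotient_of r)) (int p))"

end

theory Submission
  imports Defs
begin

text \<open>With \<open>n = (p - 1) / 2\<close> one has \<open>(n + j) (n + 1 - j) = (p\<^sup>2 - (2j - 1)\<^sup>2) / 4\<close>, which turns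
  \<open>n + k choose 2k\<close> into the exact product \<open>(2k choose k) / (-16)\<^sup>k\<close> times
  \<open>\<Prod>i = 1..k. 1 - p\<^sup>2 / (2i - 1)\<^sup>2\<close>. For \<open>i \<le> k\<close> the numbers \<open>1 / (2i - 1)\<^sup>2\<close> are
  \<open>p\<close>-integral, so expanding the product modulo \<open>(p\<^sup>2)\<^sup>2\<close> leaves only its constant and
  linear terms.\<close>

lemma of_nat_binomial_Suc_Suc:
  "of_nat (Suc (Suc k)) * of_nat (Suc k) * (of_nat (Suc m choose Suc (Suc k)) :: 'a::field_char_0)
     = (of_nat m + 1) * (of_nat m - of_nat k) * of_nat (m choose k)"
proof -
  have "of_nat (Suc k) * (of_nat (m choose Suc k) :: 'a) = (of_nat m - of_nat k) * of_nat (m choose k)"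
    using gbinomial_mult_1[of "of_nat m :: 'a" k] by (simp add: binomial_gbinomial algebra_simps)
  moreover have "of_nat (Suc (Suc k)) * (of_nat (Suc m choose Suc (Suc k)) :: 'a)
                   = (of_nat m + 1) * of_nat (m choose Suc k)"
    using Suc_times_binomial[of "Suc k" m] by (metis of_nat_Suc of_nat_mult add.commute)
  ultimately show ?thesis
    by (metis mult.assoc mult.left_commute)
qed

lemma Suc_times_central_binomial:
  "Suc k * (2 * Suc k choose Suc k) = 2 * (2 * k + 1) * (2 * k choose k)"
proof -
  have "Suc k * (2 * Suc k choose Suc k) = 2 * (Suc k * (Suc (2 * k) choose k))"
    using Suc_times_binomial[of k "Suc (2 * k)"] by simp
  also have "Suc k * (Suc (2 * k) choose k) = Suc (2 * k) * (2 * k choose k)"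
    using Suc_times_binomial_eq[of "2 * k" k] binomial_symmetric[of "Suc k" "Suc (2 * k)"] by simp
  finally show ?thesis
    by simp
qed

text \<open>No hypothesis \<open>k \<le> n\<close> is needed: for \<open>k > n\<close> both sides vanish, the right-hand side
  through its factor with \<open>2i - 1 = 2n + 1\<close>.\<close>

lemma binomial_plus_double_eq_prod:
  "(of_nat ((n + k) choose (2 * k)) :: 'a::field_char_0) =
     of_nat ((2 * k) choose k) / (-16) ^ k *
       (\<Prod>i = 1..k. 1 - (2 * of_nat n + 1) ^ 2 / of_nat (2 * i - 1) ^ 2)"
proof (induction k)
  case 0
  then show ?case by simp
next
  case (Suc k)
  let ?P = "\<Prod>i = 1..k. 1 - (2 * of_nat n + 1) ^ 2 / (of_nat (2 * i - 1) ^ 2 :: 'a)"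
  have nonzero: "(of_nat k + 1 :: 'a) \<noteq> 0" "(2 * of_nat k + 1 :: 'a) \<noteq> 0" "(2 * of_nat k + 2 :: 'a) \<noteq> 0"
    using of_nat_neq_0[of k, where 'a='a] of_nat_neq_0[of "2 * k", where 'a='a]
      of_nat_neq_0[of "2 * k + 1", where 'a='a]
    by (simp_all add: add.commute)
  have "(2 * of_nat k + 2) * (2 * of_nat k + 1) * (of_nat ((n + Suc k) choose (2 * Suc k)) :: 'a)
          = (of_nat n + of_nat k + 1) * (of_nat n - of_nat k) * of_nat ((n + k) choose (2 * k))"
    using of_nat_binomial_Suc_Suc[of "2 * k" "n + k", where 'a='a]
    by (simp add: algebra_simps del: binomial_Suc_Suc)
  then have binomial_step: "(of_nat ((n + Suc k) choose (2 * Suc k)) :: 'a) = of_nat ((n + k) choose (2 * k))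
      * ((of_nat n + of_nat k + 1) * (of_nat n - of_nat k) / ((2 * of_nat k + 2) * (2 * of_nat k + 1)))"
    using nonzero by (simp add: nonzero_eq_divide_eq ac_simps del: binomial_Suc_Suc)
  have central_step: "(of_nat (2 * Suc k choose Suc k) :: 'a)
             = of_nat (2 * k choose k) * (2 * (2 * of_nat k + 1) / (of_nat k + 1))"
    using arg_cong[OF Suc_times_central_binomial[of k], of "of_nat :: nat \<Rightarrow> 'a"] nonzero
    by (simp add: field_simps)
  have factor_eq: "1 - (2 * of_nat n + 1) ^ 2 / (2 * of_nat k + 1) ^ 2
             = - 4 * ((of_nat n + of_nat k + 1) * (of_nat n - of_nat k)) / (2 * of_nat k + 1 :: 'a) ^ 2"
    using nonzero by (simp add: divide_simps) (simp add: algebra_simps power2_eq_square)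
  have ratio_eq: "2 * (2 * of_nat k + 1) / (of_nat k + 1) * (- 4 * N / (2 * of_nat k + 1) ^ 2) / -16
                  = N / ((2 * of_nat k + 2) * (2 * of_nat k + 1 :: 'a))" for N
    using nonzero by (simp add: power2_eq_square frac_eq_eq) (simp add: algebra_simps)
  have "(of_nat ((n + Suc k) choose (2 * Suc k)) :: 'a)
          = of_nat (2 * k choose k) / (-16) ^ k * ?P
            * (2 * (2 * of_nat k + 1) / (of_nat k + 1)
               * (- 4 * ((of_nat n + of_nat k + 1) * (of_nat n - of_nat k)) / (2 * of_nat k + 1) ^ 2) / -16)"
    unfolding binomial_step Suc.IH ratio_eq by (simp add: mult.assoc)
  also have "\<dots> = of_nat (2 * Suc k choose Suc k) / (-16) ^ Suc k
                     * (?P * (1 - (2 * of_nat n + 1) ^ 2 / (2 * of_nat k + 1) ^ 2))"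
    unfolding central_step factor_eq by (simp add: ac_simps)
  also have "?P * (1 - (2 * of_nat n + 1) ^ 2 / (2 * of_nat k + 1) ^ 2)
               = (\<Prod>i = 1..Suc k. 1 - (2 * of_nat n + 1) ^ 2 / of_nat (2 * i - 1) ^ 2)"
    by (simp add: prod.nat_ivl_Suc' add.commute)
  finally show ?case .
qed

definition p_integral :: "nat \<Rightarrow> rat \<Rightarrow> bool" where
  "p_integral p r \<longleftrightarrow> (\<exists>a b. b \<noteq> 0 \<and> coprime b (int p) \<and> r = of_int a / of_int b)"

lemma p_integral_of_int_divide:
  "b \<noteq> 0 \<Longrightarrow> coprime b (int p) \<Longrightarrow> p_integral p (of_int a / of_int b)"
  unfolding p_integral_def by blast

lemma p_integral_of_int: "p_integral p (of_int a)"
  using p_integral_of_int_divide[of 1 p a] by simp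

lemma p_integral_mult: "p_integral p x \<Longrightarrow> p_integral p y \<Longrightarrow> p_integral p (x * y)"
proof -
  assume "p_integral p x" "p_integral p y"
  then obtain a b c d where "b \<noteq> 0" "coprime b (int p)" "x = of_int a / of_int b"
    "d \<noteq> 0" "coprime d (int p)" "y = of_int c / of_int d"
    unfolding p_integral_def by blast
  then show ?thesis
    using p_integral_of_int_divide[of "b * d" p "a * c"] by simp
qed

lemma p_integral_add: "p_integral p x \<Longrightarrow> p_integral p y \<Longrightarrow> p_integral p (x + y)"
proof -
  assume "p_integral p x" "p_integral p y"
  then obtain a b c d where "b \<noteq> 0" "coprime b (int p)" "x = of_int a / of_int b"
    "d \<noteq> 0" "coprime d (int p)" "y = of_int c / of_int d"
    unfolding p_integral_def by blast
  then have "x + y = of_int (a * d + c * b) / of_int (b * d)"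
    by (simp add: field_simps)
  then show ?thesis
    using \<open>b \<noteq> 0\<close> \<open>d \<noteq> 0\<close> \<open>coprime b (int p)\<close> \<open>coprime d (int p)\<close>
    by (metis p_integral_of_int_divide coprime_mult_left_iff mult_eq_0_iff)
qed

lemma p_integral_diff: "p_integral p x \<Longrightarrow> p_integral p y \<Longrightarrow> p_integral p (x - y)"
  using p_integral_add[OF _ p_integral_mult[OF p_integral_of_int[of p "-1"]]] by simp

lemma p_integral_sum: "(\<And>i. i \<in> A \<Longrightarrow> p_integral p (f i)) \<Longrightarrow> p_integral p (\<Sum>i\<in>A. f i)"
  by (induction A rule: infinite_finite_induct)
    (use p_integral_of_int[of p 0] in \<open>simp_all add: p_integral_add\<close>)

lemma p_integral_inverse_power:
  assumes "prime p" and "0 < m" and "m < p"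
  shows "p_integral p (1 / of_nat m ^ j)"
proof -
  have "\<not> p dvd m"
    using assms(2,3) by (auto dest: dvd_imp_le)
  then have "coprime m p"
    using \<open>prime p\<close> by (metis prime_imp_coprime coprime_commute)
  then have "coprime (int m ^ j) (int p)"
    by simp
  then show ?thesis
    using p_integral_of_int_divide[of "int m ^ j" p 1] assms(2) by simp
qed

lemma p_integral_divide_neg_16_power:
  assumes "odd p"
  shows "p_integral p (of_int a / (-16) ^ k)"
proof -
  have "coprime ((2::int) ^ 4) (int p)"
    using assms by (simp only: coprime_power_left_iff) simp
  then have "coprime ((-16) ^ k) (int p)"
    by simp
  then show ?thesis
    using p_integral_of_int_divide[of "(-16) ^ k" p a] by simp
qed

lemma p_integral_iff_coprime_denom:
  "p_integral p r \<longleftrightarrow> coprime (snd (quotient_of r)) (int p)"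
proof -
  obtain c d where cd: "quotient_of r = (c, d)"
    by (cases "quotient_of r")
  have "d \<noteq> 0" "coprime c d" "r = of_int c / of_int d"
    using quotient_of_denom_pos[OF cd] quotient_of_coprime[OF cd] quotient_of_div[OF cd] by simp_all
  moreover have "coprime d (int p)"
    if "b \<noteq> 0" "coprime b (int p)" "r = of_int a / of_int b" for a b
  proof -
    have "of_int a / of_int b = (of_int c / of_int d :: rat)"
      using that(3) \<open>r = of_int c / of_int d\<close> by simp
    then have "a * d = c * b"
      using \<open>b \<noteq> 0\<close> \<open>d \<noteq> 0\<close> by (simp add: field_simps flip: of_int_mult)
    then have "d dvd b"
      using \<open>coprime c d\<close> by (metis coprime_commute coprime_dvd_mult_right_iff dvd_triv_right)
    then show ?thesis
      using \<open>coprime b (int p)\<close> by (rule coprime_divisors[OF _ dvd_refl])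
  qed
  ultimately show ?thesis
    unfolding p_integral_def cd by fastforce
qed

lemma rat_cong_pow_iff:
  "rat_cong_pow p n a b \<longleftrightarrow> (\<exists>r. a - b = of_nat p ^ n * r \<and> p_integral p r)"
  by (simp add: rat_cong_pow_def p_integral_iff_coprime_denom)

lemma prod_one_minus_expansion:
  assumes "finite A" and "\<And>i. i \<in> A \<Longrightarrow> p_integral p (x i)" and "p_integral p q"
  shows "\<exists>r. p_integral p r \<and> (\<Prod>i\<in>A. 1 - q * x i) = 1 - q * (\<Sum>i\<in>A. x i) + q ^ 2 * r"
  using assms(1,2)
proof (induction A rule: finite_induct)
  case empty
  show ?case
    using p_integral_of_int[of p 0] by auto
next
  case (insert j A)
  then obtain r where r: "p_integral p r" "(\<Prod>i\<in>A. 1 - q * x i) = 1 - q * (\<Sum>i\<in>A. x i) + q ^ 2 * r"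
    by auto
  define S where "S = (\<Sum>i\<in>A. x i)"
  have "p_integral p (x j)" "p_integral p S"
    using insert.prems unfolding S_def by (auto intro: p_integral_sum)
  then have "p_integral p (x j * S + r - q * x j * r)"
    by (intro p_integral_diff p_integral_add p_integral_mult r(1) assms(3))
  moreover have "(1 - q * x j) * (1 - q * S + q ^ 2 * r)
                   = 1 - q * (x j + S) + q ^ 2 * (x j * S + r - q * x j * r)"
    by (simp add: algebra_simps power2_eq_square)
  ultimately show ?case
    using insert.hyps r(2) unfolding S_def by auto
qed

theorem lemma2p2:
  fixes p k :: nat
  assumes "prime p" and "odd p" and "1 \<le> k" and "k \<le> (p - 1) div 2"
  shows "rat_cong_pow p 4
           (of_nat (((p - 1) div 2 + k) choose (2 * k)))
           (of_nat ((2 * k) choose k) / (-16) ^ k *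
              (1 - of_nat p ^ 2 * (\<Sum>i = 1..k. 1 / (of_nat (2 * i - 1))^2)))"
proof -
  define n where "n = (p - 1) div 2"
  define c :: rat where "c = of_nat ((2 * k) choose k) / (-16) ^ k"
  define q :: rat where "q = of_nat p ^ 2"
  define x :: "nat \<Rightarrow> rat" where "x i = 1 / of_nat (2 * i - 1) ^ 2" for i
  have p_eq: "p = 2 * n + 1"
    using \<open>odd p\<close> unfolding n_def by (auto elim!: oddE)
  have "k \<le> n"
    using assms(4) unfolding n_def .
  then have "p_integral p (x i)" if "i \<in> {1..k}" for i
    unfolding x_def using that p_eq by (intro p_integral_inverse_power \<open>prime p\<close>) auto
  moreover have "p_integral p q"
    using p_integral_of_int[of p "int p ^ 2"] unfolding q_def by simp
  ultimately obtain r where r: "p_integral p r"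
    "(\<Prod>i = 1..k. 1 - q * x i) = 1 - q * (\<Sum>i = 1..k. x i) + q ^ 2 * r"
    using prod_one_minus_expansion[of "{1..k}" p x q] by auto
  have "p_integral p c"
    using p_integral_divide_neg_16_power[OF \<open>odd p\<close>, of "int ((2 * k) choose k)" k]
    unfolding c_def by simp
  have binomial_eq: "of_nat ((n + k) choose (2 * k)) = c * (\<Prod>i = 1..k. 1 - q * x i)"
    using binomial_plus_double_eq_prod[of n k, where 'a=rat]
    unfolding c_def q_def x_def p_eq by (simp add: add.commute)
  have "of_nat ((n + k) choose (2 * k)) - c * (1 - q * (\<Sum>i = 1..k. x i)) = c * (q ^ 2 * r)"
    unfolding binomial_eq r(2) by (simp add: algebra_simps)
  also have "\<dots> = of_nat p ^ 4 * (c * r)"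
    unfolding q_def by (simp flip: power_mult)
  finally show ?thesis
    unfolding rat_cong_pow_iff n_def[symmetric] c_def[symmetric] q_def[symmetric] x_def[symmetric]
    using p_integral_mult[OF \<open>p_integral p c\<close> r(1)] by blast
qed

end
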